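(* Let $D=\mathrm{diag}(1,-1,1,-1,\ldots)=(1,-x)$, $\mathbb{F}^{\rm S}=(1,x(1+x))$, $\mathbb{L}^{\rm S}=(1+2x,x(1+x))$, and write $D(\mathbb{F}^{\rm S})^{-1}D=[r_{ij}]_{i,j\ge0}$ and $D(\mathbb{L}^{\rm S})^{-1}D=[q_{ij}]_{i,j\ge0}$. Then: (a) $r_{00}=1$, and for $i=1,2,\ldots$ and $j=2,3,\ldots$: $r_{i0}=0$, $r_{i1}=\frac{1}{i}\binom{2i-2}{i-1}$, and $r_{ij}=-r_{i-1,j-2}+r_{i,j-1}$. (b) $q_{i0}=\binom{2i}{i}$ for $i=0,1,2,\ldots$; $q_{i1}=\frac12\binom{2i}{i}$ for $i=1,2,\ldots$; and $q_{ij}=-q_{i-1,j-2}+q_{i,j-1}$ for $i=1,2,\ldots$, $j=2,3,\ldots$.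
   Context: All matrices are infinite with rows and columns indexed by $0,1,2,\ldots$. For formal power series $g(x)=g_0+g_1x+\cdots$ with $g_0\ne0$ and $f(x)=f_1x+f_2x^2+\cdots$ with $f_1\ne0$, $(g(x),f(x))$ denotes the (Riordan) infinite lower triangular matrix whose $j$-th column has generating function $g(x)f(x)^j$. These matrices form a group under matrix multiplication with $(g,f)(h,l)=(g\cdot h(f),l(f))$. *)

theory Defs
  imports "HOL-Computational_Algebra.Formal_Power_Series"
begin

text \<open>Infinite matrices are functions nat => nat => 'a (row index first).
  The Riordan array (g,f): column j has generating function g * f^j.\<close>
definition riordan :: "'a::comm_ring_1 fps \<Rightarrow> 'a fps \<Rightarrow> nat \<Rightarrow> nat \<Rightarrow> 'a" where
  "riordan g f i j = fps_nth (g * f ^ j) i"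

definition lower_tri :: "(nat \<Rightarrow> nat \<Rightarrow> 'a::zero) \<Rightarrow> bool" where
  "lower_tri M \<longleftrightarrow> (\<forall>i j. i < j \<longrightarrow> M i j = 0)"

text \<open>Matrix product; the sum over k \<le> i is the full product whenever the
  left factor is lower triangular (all matrices used here are).\<close>
definition ltmult :: "(nat \<Rightarrow> nat \<Rightarrow> 'a::comm_ring_1) \<Rightarrow> (nat \<Rightarrow> nat \<Rightarrow> 'a) \<Rightarrow> nat \<Rightarrow> nat \<Rightarrow> 'a" where
  "ltmult A B i j = (\<Sum>k\<le>i. A i k * B k j)"

definition idm :: "nat \<Rightarrow> nat \<Rightarrow> 'a::comm_ring_1" where
  "idm i j = (if i = j then 1 else 0)"

definition is_lt_inverse :: "(nat \<Rightarrow> nat \<Rightarrow> 'a::comm_ring_1) \<Rightarrow> (nat \<Rightarrow> nat \<Rightarrow> 'a) \<Rightarrow> bool" where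
  "is_lt_inverse A B \<longleftrightarrow> lower_tri B \<and> ltmult A B = idm \<and> ltmult B A = idm"

end

theory Submission
  imports Defs
begin

text \<open>Conjugating by \<open>D = (1,-x)\<close> sends \<open>(g(x), f(x))\<close> to \<open>(g(-x), -f(-x))\<close>, so
  \<open>D (F^S)^-1 D\<close> and \<open>D (L^S)^-1 D\<close> are the inverses of \<open>(1, x(1-x))\<close> and \<open>(1-2x, x(1-x))\<close>.
  The compositional inverse of \<open>x(1-x)\<close> is \<open>c = (1 - sqrt(1-4x))/2\<close>, the Catalan series shifted
  by one, and \<open>1/(1-2c) = 1/sqrt(1-4x)\<close> is the central binomial series \<open>C\<close>; so the two matrices
  are \<open>(1,c)\<close> and \<open>(C,c)\<close>. The column recurrence comes from \<open>c^2 = c - x\<close>, and the second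
  column of \<open>(C,c)\<close> is \<open>Cc = (C-1)/2\<close>.\<close>

unbundle fps_syntax

lemma fps_power_nth_below:
  fixes f :: "'a::idom fps"
  assumes "f $ 0 = 0" and "n < k"
  shows "(f ^ k) $ n = 0"
  using startsby_zero_power_prefix assms by blast

lemma fps_mult_compose_nth:
  fixes g a f :: "'a::idom fps"
  assumes f0: "f $ 0 = 0"
  shows "(g * (a oo f)) $ i = (\<Sum>k\<le>i. a $ k * (g * f ^ k) $ i)"
proof -
  have "(g * (a oo f)) $ i = (\<Sum>m=0..i. g $ m * (\<Sum>k=0..i-m. a $ k * (f ^ k) $ (i-m)))"
    by (simp add: fps_mult_nth fps_compose_nth)
  also have "\<dots> = (\<Sum>m=0..i. g $ m * (\<Sum>k\<le>i. a $ k * (f ^ k) $ (i-m)))"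
  proof (rule sum.cong[OF refl])
    fix m
    have "(\<Sum>k=0..i-m. a $ k * (f ^ k) $ (i-m)) = (\<Sum>k\<le>i. a $ k * (f ^ k) $ (i-m))"
      by (rule sum.mono_neutral_left) (auto simp: fps_power_nth_below[OF f0])
    then show "g $ m * (\<Sum>k=0..i-m. a $ k * (f ^ k) $ (i-m))
        = g $ m * (\<Sum>k\<le>i. a $ k * (f ^ k) $ (i-m))" by simp
  qed
  also have "\<dots> = (\<Sum>k\<le>i. \<Sum>m=0..i. a $ k * (g $ m * (f ^ k) $ (i-m)))"
    by (subst sum.swap) (simp add: sum_distrib_left mult_ac)
  also have "\<dots> = (\<Sum>k\<le>i. a $ k * (g * f ^ k) $ i)"
    by (simp add: fps_mult_nth sum_distrib_left)
  finally show ?thesis .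
qed

lemma riordan_mult:
  fixes g f h l :: "'a::idom fps"
  assumes f0: "f $ 0 = 0"
  shows "ltmult (riordan g f) (riordan h l) = riordan (g * (h oo f)) (l oo f)"
proof (intro ext)
  fix i j
  have "riordan (g * (h oo f)) (l oo f) i j = (g * ((h * l ^ j) oo f)) $ i"
    by (simp add: riordan_def fps_compose_mult_distrib[OF f0] fps_compose_power[OF f0] mult_ac)
  also have "\<dots> = (\<Sum>k\<le>i. (h * l ^ j) $ k * (g * f ^ k) $ i)"
    by (rule fps_mult_compose_nth[OF f0])
  finally show "ltmult (riordan g f) (riordan h l) i j = riordan (g * (h oo f)) (l oo f) i j"
    by (simp add: ltmult_def riordan_def mult_ac)
qed

lemma lower_tri_riordan:
  fixes g f :: "'a::idom fps"
  assumes "f $ 0 = 0"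
  shows "lower_tri (riordan g f)"
  unfolding lower_tri_def riordan_def fps_mult_nth
  using fps_power_nth_below[OF assms] by (auto intro: sum.neutral)

lemma riordan_1_X: "riordan 1 fps_X = idm"
  by (auto simp: riordan_def idm_def fun_eq_iff)

lemma lower_tri_ltmult:
  assumes "lower_tri A" "lower_tri B"
  shows "lower_tri (ltmult A B)"
  using assms unfolding lower_tri_def ltmult_def
  by (auto intro!: sum.neutral)

lemma ltmult_assoc:
  assumes "lower_tri B"
  shows "ltmult (ltmult A B) C = ltmult A (ltmult B C)"
proof (intro ext)
  fix i j
  have "ltmult (ltmult A B) C i j = (\<Sum>k\<le>i. \<Sum>l\<le>i. A i k * B k l * C l j)"
    by (subst sum.swap) (simp add: ltmult_def sum_distrib_right)
  also have "\<dots> = (\<Sum>k\<le>i. A i k * (\<Sum>l\<le>k. B k l * C l j))"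
  proof (rule sum.cong[OF refl])
    fix k assume k: "k \<in> {..i}"
    have "(\<Sum>l\<le>k. B k l * C l j) = (\<Sum>l\<le>i. B k l * C l j)"
      by (rule sum.mono_neutral_left) (use k assms in \<open>auto simp: lower_tri_def\<close>)
    then show "(\<Sum>l\<le>i. A i k * B k l * C l j) = A i k * (\<Sum>l\<le>k. B k l * C l j)"
      by (simp add: sum_distrib_left mult_ac)
  qed
  finally show "ltmult (ltmult A B) C i j = ltmult A (ltmult B C) i j"
    by (simp add: ltmult_def)
qed

lemma ltmult_idm_left: "ltmult idm A = A"
  by (simp add: fun_eq_iff ltmult_def idm_def if_distrib[of "\<lambda>x. x * _"] cong: if_cong)

lemma ltmult_idm_right:
  assumes "lower_tri A"
  shows "ltmult A idm = A"
  using assms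
  by (auto simp: fun_eq_iff ltmult_def idm_def lower_tri_def if_distrib[of "\<lambda>x. _ * x"]
      cong: if_cong)

lemma lt_inverse_unique:
  assumes "lower_tri A" "lower_tri X" "is_lt_inverse A B" "ltmult X A = idm"
  shows "X = B"
proof -
  have "X = ltmult X (ltmult A B)"
    using assms by (simp add: is_lt_inverse_def ltmult_idm_right)
  also have "\<dots> = ltmult (ltmult X A) B" by (simp add: ltmult_assoc assms(1))
  also have "\<dots> = B" using assms(4) by (simp add: ltmult_idm_left)
  finally show ?thesis .
qed

lemma ltmult_conj_eq_idm:
  assumes D: "lower_tri D" "ltmult D D = idm"
    and AB: "lower_tri A" "lower_tri B" "ltmult A B = idm"
  shows "ltmult (ltmult D (ltmult A D)) (ltmult D (ltmult B D)) = idm"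
proof -
  have "ltmult (ltmult D (ltmult A D)) (ltmult D (ltmult B D))
      = ltmult D (ltmult A (ltmult D (ltmult D (ltmult B D))))"
    using D AB by (simp add: ltmult_assoc lower_tri_ltmult)
  also have "\<dots> = ltmult D (ltmult A (ltmult B D))"
    using ltmult_assoc[OF D(1), of D "ltmult B D"] D(2) by (simp add: ltmult_idm_left)
  also have "\<dots> = idm"
    using ltmult_assoc[OF AB(2), of A D] AB(3) D(2) by (simp add: ltmult_idm_left)
  finally show ?thesis .
qed

lemma is_lt_inverse_conj:
  assumes "lower_tri D" "ltmult D D = idm" "lower_tri A" "is_lt_inverse A B"
  shows "is_lt_inverse (ltmult D (ltmult A D)) (ltmult D (ltmult B D))"
  using assms ltmult_conj_eq_idm[of D A B] ltmult_conj_eq_idm[of D B A]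
  by (simp add: is_lt_inverse_def lower_tri_ltmult)

lemma riordan_neg_X_involution:
  "ltmult (riordan 1 (- fps_X)) (riordan 1 (- fps_X)) = (idm :: _ \<Rightarrow> _ \<Rightarrow> 'a::idom)"
  by (simp add: riordan_mult fps_compose_uminus riordan_1_X)

lemma riordan_conj_neg_X:
  fixes g f :: "'a::idom fps"
  assumes "f $ 0 = 0"
  shows "ltmult (riordan 1 (- fps_X)) (ltmult (riordan g f) (riordan 1 (- fps_X)))
    = riordan (g oo - fps_X) (- (f oo - fps_X))"
  using assms by (simp add: riordan_mult fps_compose_uminus)

lemma riordan_column_recurrence:
  fixes g f :: "'a::comm_ring_1 fps"
  assumes f: "f = fps_X + f ^ 2" and "i \<ge> 1" "j \<ge> 2"
  shows "riordan g f i j = - riordan g f (i - 1) (j - 2) + riordan g f i (j - 1)"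
proof -
  obtain k where j: "j = k + 2" using \<open>j \<ge> 2\<close> by (metis add.commute le_Suc_ex)
  have "g * f ^ j = g * f ^ k * f ^ 2" by (simp add: j power_add power2_eq_square mult_ac)
  also have "\<dots> = g * f ^ k * (f - fps_X)" using f by (metis add_diff_cancel_left')
  also have "\<dots> = g * f ^ (j - 1) - fps_X * (g * f ^ (j - 2))" by (simp add: j algebra_simps)
  finally show ?thesis using \<open>i \<ge> 1\<close> by (simp add: riordan_def)
qed

lemma riordan_inverse_of_X_mult_one_minus_X:
  fixes g h f :: "'a::idom fps"
  assumes "f $ 0 = 0" "f = fps_X + f ^ 2" "g * (h oo f) = 1"
  shows "ltmult (riordan g f) (riordan h (fps_X * (1 - fps_X))) = idm"
proof -
  have "(fps_X * (1 - fps_X)) oo f = f - f ^ 2"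
    using assms(1)
    by (simp add: fps_compose_mult_distrib fps_compose_sub_distrib power2_eq_square algebra_simps)
  also have "\<dots> = fps_X" using assms(2) by (metis add_diff_cancel_right')
  finally show ?thesis using assms by (simp add: riordan_mult riordan_1_X)
qed

lemma central_binomial_Suc:
  "Suc n * ((2 * Suc n) choose Suc n) = 2 * (2 * n + 1) * ((2 * n) choose n)"
proof -
  have a: "Suc n * ((2 * Suc n) choose Suc n) = 2 * Suc n * (Suc (2 * n) choose n)"
    using Suc_times_binomial[of n "Suc (2 * n)"] by simp
  have b: "Suc n * (Suc (2 * n) choose n) = Suc (2 * n) * ((2 * n) choose n)"
    using Suc_times_binomial[of n "2 * n"] Suc_times_binomial_add[of n n] by (simp add: mult_2)
  have "Suc n * (Suc n * ((2 * Suc n) choose Suc n))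
      = 2 * Suc n * (Suc n * (Suc (2 * n) choose n))"
    unfolding a by (simp add: algebra_simps del: binomial_Suc_Suc)
  also have "\<dots> = Suc n * (2 * (2 * n + 1) * ((2 * n) choose n))"
    unfolding b by (simp add: algebra_simps del: binomial_Suc_Suc)
  finally show ?thesis using mult_cancel1 by blast
qed

definition central_binomial_fps :: "'a::field_char_0 fps" where
  "central_binomial_fps = Abs_fps (\<lambda>n. of_nat ((2 * n) choose n))"

lemma central_binomial_fps_nth: "central_binomial_fps $ n = of_nat ((2 * n) choose n)"
  by (simp add: central_binomial_fps_def)

lemma central_binomial_fps_nth_Suc:
  "of_nat (Suc n) * (central_binomial_fps $ Suc n :: 'a::field_char_0)
    = (4 * of_nat n + 2) * central_binomial_fps $ n"
  using arg_cong[OF central_binomial_Suc[of n], of "of_nat :: nat \<Rightarrow> 'a"]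
  by (simp only: central_binomial_fps_nth of_nat_mult) (simp add: algebra_simps)

lemma central_binomial_fps_deriv:
  "(1 - 4 * fps_X) * fps_deriv central_binomial_fps = 2 * (central_binomial_fps :: 'a::field_char_0 fps)"
proof (rule fps_ext)
  fix n
  have "((1 - 4 * fps_X) * fps_deriv central_binomial_fps) $ n
      = of_nat (Suc n) * central_binomial_fps $ Suc n - 4 * (of_nat n * central_binomial_fps $ n :: 'a)"
    by (cases n) (simp_all add: numeral_fps_const algebra_simps)
  also have "\<dots> = 2 * central_binomial_fps $ n"
    using central_binomial_fps_nth_Suc[of n] by (simp add: algebra_simps)
  finally show "((1 - 4 * fps_X) * fps_deriv central_binomial_fps) $ n
      = (2 * central_binomial_fps :: 'a fps) $ n"
    by (simp add: numeral_fps_const)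
qed

text \<open>That is, \<open>C(x) = 1 / sqrt(1 - 4x)\<close>: the derivative of the left side vanishes by the
  differential equation above.\<close>
lemma central_binomial_fps_squared:
  "central_binomial_fps ^ 2 * (1 - 4 * fps_X) = (1 :: 'a::field_char_0 fps)"
proof -
  let ?T = "central_binomial_fps ^ 2 * (1 - 4 * fps_X) :: 'a fps"
  have "fps_deriv ?T
      = 2 * central_binomial_fps * ((1 - 4 * fps_X) * fps_deriv central_binomial_fps)
        - 4 * central_binomial_fps ^ 2"
    by (simp add: fps_deriv_power algebra_simps power2_eq_square numeral_fps_const)
  also have "\<dots> = 0" by (simp add: central_binomial_fps_deriv power2_eq_square)
  finally have "?T = fps_const (?T $ 0)" by (simp only: fps_deriv_eq_0_iff)
  also have "?T $ 0 = 1" by (simp add: central_binomial_fps_nth numeral_fps_const power2_eq_square)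
  finally show ?thesis by simp
qed

text \<open>The series \<open>(1 - sqrt(1 - 4x)) / 2\<close>, whose \<open>n\<close>-th coefficient is the Catalan number
  \<open>Cat(n-1)\<close> for \<open>n \<ge> 1\<close>; the square root is written as \<open>(1 - 4x) C(x)\<close>.\<close>
definition shifted_catalan_fps :: "'a::field_char_0 fps" where
  "shifted_catalan_fps = fps_const (1/2) * (1 - (1 - 4 * fps_X) * central_binomial_fps)"

lemma two_shifted_catalan_fps:
  "2 * shifted_catalan_fps = 1 - (1 - 4 * fps_X) * (central_binomial_fps :: 'a::field_char_0 fps)"
proof -
  have "(2 :: 'a fps) * fps_const (1/2) = 1" by (simp add: numeral_fps_const)
  then show ?thesis unfolding shifted_catalan_fps_def by (metis mult.assoc mult_1)
qed

lemma shifted_catalan_fps_nth_0: "shifted_catalan_fps $ 0 = 0"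
  by (simp add: shifted_catalan_fps_def central_binomial_fps_nth numeral_fps_const)

lemma shifted_catalan_fps_nth:
  assumes "n \<ge> 1"
  shows "shifted_catalan_fps $ n = (1 / of_nat n) * (of_nat ((2 * n - 2) choose (n - 1)) :: 'a::field_char_0)"
proof -
  obtain m where n: "n = Suc m" using assms by (cases n) auto
  have c: "2 * shifted_catalan_fps $ n = 4 * central_binomial_fps $ m - (central_binomial_fps $ n :: 'a)"
    using arg_cong[OF two_shifted_catalan_fps, of "\<lambda>f. f $ n"] n
    by (simp add: numeral_fps_const algebra_simps)
  have "of_nat n * (2 * shifted_catalan_fps $ n)
      = of_nat n * (4 * central_binomial_fps $ m - (central_binomial_fps $ n :: 'a))"
    unfolding c ..
  also have "\<dots> = 2 * central_binomial_fps $ m"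
    using central_binomial_fps_nth_Suc[where 'a='a, of m] n by (simp add: algebra_simps)
  finally have "of_nat n * (2 * shifted_catalan_fps $ n) = 2 * (central_binomial_fps $ m :: 'a)" .
  moreover have "of_nat n \<noteq> (0 :: 'a)" using assms by simp
  ultimately have "shifted_catalan_fps $ n = central_binomial_fps $ m / (of_nat n :: 'a)"
    by (simp add: field_simps)
  moreover have "2 * n - 2 = 2 * m" "n - 1 = m" using n by auto
  ultimately show ?thesis by (simp add: central_binomial_fps_nth)
qed

lemma shifted_catalan_fps_quadratic:
  "(shifted_catalan_fps :: 'a::field_char_0 fps) = fps_X + shifted_catalan_fps ^ 2"
proof -
  let ?Y = "(1 - 4 * fps_X) * central_binomial_fps :: 'a fps"
  have "4 * shifted_catalan_fps ^ 2 = (2 * shifted_catalan_fps :: 'a fps) ^ 2"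
    by (simp add: power2_eq_square algebra_simps)
  also have "\<dots> = (1 - ?Y) ^ 2"
    by (simp only: two_shifted_catalan_fps)
  also have "\<dots> = 1 - 2 * ?Y + (1 - 4 * fps_X) * (central_binomial_fps ^ 2 * (1 - 4 * fps_X))"
    by (simp add: power2_eq_square algebra_simps)
  also have "\<dots> = 1 - 2 * ?Y + (1 - 4 * fps_X)"
    by (simp only: central_binomial_fps_squared mult_1_right)
  also have "\<dots> = 2 * (1 - ?Y) - 4 * fps_X"
    by (simp add: algebra_simps)
  also have "\<dots> = 4 * shifted_catalan_fps - 4 * fps_X"
    by (simp only: two_shifted_catalan_fps[symmetric]) (simp add: algebra_simps)
  finally have "4 * shifted_catalan_fps = 4 * (fps_X + shifted_catalan_fps ^ 2 :: 'a fps)"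
    by (simp add: algebra_simps)
  moreover have "(4 :: 'a fps) \<noteq> 0" by (simp add: numeral_fps_const)
  ultimately show ?thesis by (metis mult_left_cancel)
qed

lemma central_binomial_fps_shifted_catalan:
  "central_binomial_fps * (1 - 2 * shifted_catalan_fps) = (1 :: 'a::field_char_0 fps)"
  unfolding two_shifted_catalan_fps using central_binomial_fps_squared
  by (simp add: power2_eq_square algebra_simps)

lemma central_binomial_fps_shifted_catalan_nth:
  assumes "n \<ge> 1"
  shows "(central_binomial_fps * shifted_catalan_fps) $ n = (central_binomial_fps $ n :: 'a::field_char_0) / 2"
proof -
  let ?c = "shifted_catalan_fps :: 'a fps" and ?C = "central_binomial_fps :: 'a fps"
  have "2 * (?C * ?c) = ?C - ?C * (1 - 2 * ?c)" by (simp add: algebra_simps)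
  also have "\<dots> = ?C - 1" by (simp only: central_binomial_fps_shifted_catalan)
  finally have "(2 * (?C * ?c)) $ n = (?C - 1) $ n" by (rule arg_cong)
  then have "2 * (?C * ?c) $ n = ?C $ n" using assms by (simp add: numeral_fps_const)
  then show ?thesis by (simp add: field_simps)
qed

theorem theorem3p2:
  fixes FSinv LSinv :: "nat \<Rightarrow> nat \<Rightarrow> real"
  assumes "is_lt_inverse (riordan 1 (fps_X * (1 + fps_X))) FSinv"
    and "is_lt_inverse (riordan (1 + 2 * fps_X) (fps_X * (1 + fps_X))) LSinv"
  defines "D \<equiv> riordan (1::real fps) (- fps_X)"
  defines "r \<equiv> ltmult D (ltmult FSinv D)"
  defines "q \<equiv> ltmult D (ltmult LSinv D)"
  shows "r 0 0 = 1
     \<and> (\<forall>i\<ge>1. r i 0 = 0)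
     \<and> (\<forall>i\<ge>1. r i 1 = (1 / real i) * real ((2*i - 2) choose (i - 1)))
     \<and> (\<forall>i\<ge>1. \<forall>j\<ge>2. r i j = - r (i - 1) (j - 2) + r i (j - 1))
     \<and> (\<forall>i. q i 0 = real ((2*i) choose i))
     \<and> (\<forall>i\<ge>1. q i 1 = (1/2) * real ((2*i) choose i))
     \<and> (\<forall>i\<ge>1. \<forall>j\<ge>2. q i j = - q (i - 1) (j - 2) + q i (j - 1))"
proof -
  let ?c = "shifted_catalan_fps :: real fps" and ?C = "central_binomial_fps :: real fps"
  have conj: "- ((fps_X * (1 + fps_X)) oo - fps_X) = (fps_X * (1 - fps_X) :: real fps)"
    by (simp add: fps_compose_mult_distrib fps_compose_add_distrib)
  have conj_inverse: "is_lt_inverse (riordan (g oo - fps_X) (fps_X * (1 - fps_X))) (ltmult D (ltmult B D))"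
    if "is_lt_inverse (riordan g (fps_X * (1 + fps_X))) B" for g B
    using is_lt_inverse_conj[OF _ riordan_neg_X_involution lower_tri_riordan that]
    by (simp add: D_def riordan_conj_neg_X conj lower_tri_riordan)
  have c0: "?c $ 0 = 0" and c_quadratic: "?c = fps_X + ?c ^ 2"
    by (rule shifted_catalan_fps_nth_0 shifted_catalan_fps_quadratic)+
  have "?C * ((1 - 2 * fps_X) oo ?c) = 1"
    using c0 central_binomial_fps_shifted_catalan
    by (simp add: fps_compose_sub_distrib fps_compose_mult_distrib)
  then have q: "q = riordan ?C ?c"
    using lt_inverse_unique[OF lower_tri_riordan lower_tri_riordan conj_inverse[OF assms(2)]
        riordan_inverse_of_X_mult_one_minus_X[OF c0 c_quadratic]] c0
    by (simp add: q_def fps_compose_add_distrib fps_compose_mult_distrib)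
  have r: "r = riordan 1 ?c"
    using lt_inverse_unique[OF lower_tri_riordan lower_tri_riordan conj_inverse[OF assms(1)]
        riordan_inverse_of_X_mult_one_minus_X[OF c0 c_quadratic]] c0
    by (simp add: r_def)
  show ?thesis
    using central_binomial_fps_shifted_catalan_nth[where 'a=real]
      riordan_column_recurrence[OF c_quadratic, of _ _ 1]
      riordan_column_recurrence[OF c_quadratic, of _ _ ?C]
    by (simp add: r q riordan_def shifted_catalan_fps_nth central_binomial_fps_nth)
qed

end
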